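(* In the While-language extended with non-deterministic input, for every command $c$ and store $\sigma$: $(c,\sigma)\to^\infty$ if and only if for every store $\sigma'$, $(c,\sigma,\Downarrow)\Rightarrow^{co}_G\sigma',\Uparrow$.
   Context: Extended While-language syntax: variables $x$ range over a countably infinite set $\mathit{Var}$; $n$ ranges over natural numbers; values are $v ::= \mathsf{null}\mid n$ ($\mathsf{null}$ distinct from every natural number); expressions are $e ::= v\mid x\mid e_1\oplus e_2\mid\mathsf{input}$ with $\oplus\in\{+,-,*\}$, where $\oplus(n_1,n_2)$ is the result of the operation on naturals; commands are $c ::= \mathsf{skip}\mid\mathsf{alloc}\ x\mid x:=e\mid c_1;c_2\mid \mathsf{if}\ e\ c_1\ c_2\mid\mathsf{while}\ e\ c$. A store $\sigma$ is a finite partial map from $\mathit{Var}$ to values, with domain $\mathrm{dom}(\sigma)$, lookup $\sigma(x)$, update $\sigma[x\mapsto v]$. Expression evaluation $(e,\sigma)\Rightarrow_E v$ is the least relation with: $(v,\sigma)\Rightarrow_E v$; $(x,\sigma)\Rightarrow_E\sigma(x)$ if $x\in\mathrm{dom}(\sigma)$; if $(e_1,\sigma)\Rightarrow_E n_1$ and $(e_2,\sigma)\Rightarrow_E n_2$ with $n_1,n_2$ naturals then $(e_1\oplus e_2,\sigma)\Rightarrow_E\oplus(n_1,n_2)$; and $(\mathsf{input},\sigma)\Rightarrow_E v$ for every value $v$. Small-step relation $(c,\sigma)\to(c',\sigma')$ is the least relation with: $(\mathsf{alloc}\ x,\sigma)\to(\mathsf{skip},\sigma[x\mapsto\mathsf{null}])$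 if $x\notin\mathrm{dom}(\sigma)$; $(x:=e,\sigma)\to(\mathsf{skip},\sigma[x\mapsto v])$ if $x\in\mathrm{dom}(\sigma)$ and $(e,\sigma)\Rightarrow_E v$; $(c_1;c_2,\sigma)\to(c_1';c_2,\sigma')$ if $(c_1,\sigma)\to(c_1',\sigma')$; $(\mathsf{skip};c_2,\sigma)\to(c_2,\sigma)$; $(\mathsf{if}\ e\ c_1\ c_2,\sigma)\to(c_1,\sigma)$ if $(e,\sigma)\Rightarrow_E v$, $v\neq 0$; $(\mathsf{if}\ e\ c_1\ c_2,\sigma)\to(c_2,\sigma)$ if $(e,\sigma)\Rightarrow_E 0$; $(\mathsf{while}\ e\ c,\sigma)\to(c;\mathsf{while}\ e\ c,\sigma)$ if $(e,\sigma)\Rightarrow_E v$, $v\neq0$; $(\mathsf{while}\ e\ c,\sigma)\to(\mathsf{skip},\sigma)$ if $(e,\sigma)\Rightarrow_E 0$. The predicate $(c,\sigma)\to^\infty$ is coinductively defined (greatest predicate) by: if $(c,\sigma)\to(c',\sigma')$ and $(c',\sigma')\to^\infty$ then $(c,\sigma)\to^\infty$. Flag-based big-step semantics: status flags $\delta ::= \Downarrow\mid\Uparrow$. Expression evaluation $(e,\sigma,\delta)\Rightarrow_{GE}v,\delta'$ is the least relation with: $(v,\sigma,\Downarrow)\Rightarrow_{GE}v,\Downarrow$; $(x,\sigma,\Downarrow)\Rightarrow_{GE}\sigma(x),\Downarrow$ if $x\in\mathrm{dom}(\sigma)$; if $(e_1,\sigma,\Downarrow)\Rightarrow_{GE}n_1,\delta$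 and $(e_2,\sigma,\delta)\Rightarrow_{GE}n_2,\delta'$ ($n_1,n_2$ naturals) then $(e_1\oplus e_2,\sigma,\Downarrow)\Rightarrow_{GE}\oplus(n_1,n_2),\delta'$; $(\mathsf{input},\sigma,\Downarrow)\Rightarrow_{GE}v,\Downarrow$ for every value $v$; and $(e,\sigma,\Uparrow)\Rightarrow_{GE}v,\Uparrow$ for every value $v$. The command rules for judgments $(c,\sigma,\delta)\Rightarrow_G\sigma',\delta'$ are: $(\mathsf{skip},\sigma,\Downarrow)\Rightarrow_G\sigma,\Downarrow$; $(\mathsf{alloc}\ x,\sigma,\Downarrow)\Rightarrow_G\sigma[x\mapsto\mathsf{null}],\Downarrow$ if $x\notin\mathrm{dom}(\sigma)$; $(x:=e,\sigma,\Downarrow)\Rightarrow_G\sigma[x\mapsto v],\delta$ if $x\in\mathrm{dom}(\sigma)$ and $(e,\sigma,\Downarrow)\Rightarrow_{GE}v,\delta$; $(c_1;c_2,\sigma,\Downarrow)\Rightarrow_G\sigma'',\delta'$ if $(c_1,\sigma,\Downarrow)\Rightarrow_G\sigma',\delta$ and $(c_2,\sigma',\delta)\Rightarrow_G\sigma'',\delta'$; $(\mathsf{if}\ e\ c_1\ c_2,\sigma,\Downarrow)\Rightarrow_G\sigma',\delta'$ if $v\ne0$, $(e,\sigma,\Downarrow)\Rightarrow_{GE}v,\delta$ and $(c_1,\sigma,\delta)\Rightarrow_G\sigma',\delta'$; $(\mathsf{if}\ e\ c_1\ c_2,\sigma,\Downarrow)\Rightarrow_G\sigma',\delta'$ if $(e,\sigma,\Downarrow)\Rightarrow_{GE}0,\delta$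 and $(c_2,\sigma,\delta)\Rightarrow_G\sigma',\delta'$; $(\mathsf{while}\ e\ c,\sigma,\Downarrow)\Rightarrow_G\sigma'',\delta''$ if $(e,\sigma,\Downarrow)\Rightarrow_{GE}v,\delta$, $v\ne0$, $(c,\sigma,\delta)\Rightarrow_G\sigma',\delta'$ and $(\mathsf{while}\ e\ c,\sigma',\delta')\Rightarrow_G\sigma'',\delta''$; $(\mathsf{while}\ e\ c,\sigma,\Downarrow)\Rightarrow_G\sigma,\delta$ if $(e,\sigma,\Downarrow)\Rightarrow_{GE}0,\delta$; $(c,\sigma,\Uparrow)\Rightarrow_G\sigma',\Uparrow$ for every store $\sigma'$. $\Rightarrow^{co}_G$ is the coinductive interpretation of these command rules (greatest relation such that every element is the conclusion of a rule instance whose command premises lie in it). *)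

theory Defs
  imports Main "HOL-Library.Finite_Map"
begin

type_synonym vname = string

datatype val = Null | Num nat

datatype binop = Plus | Minus | Times

fun apply_op :: "binop \<Rightarrow> nat \<Rightarrow> nat \<Rightarrow> nat" where
  "apply_op Plus a b = a + b"
| "apply_op Minus a b = a - b"
| "apply_op Times a b = a * b"

datatype exp = V val | Var vname | Bin binop exp exp | Input

datatype com = Skip | Alloc vname | Assign vname exp | Seq com com
  | If exp com com | While exp com

type_synonym store = "(vname, val) fmap"

inductive eval :: "exp \<Rightarrow> store \<Rightarrow> val \<Rightarrow> bool" where
  eval_val: "eval (V v) \<sigma> v"
| eval_var: "fmlookup \<sigma> x = Some v \<Longrightarrow> eval (Var x) \<sigma> v"
| eval_bin: "eval e1 \<sigma> (Num n1) \<Longrightarrow> eval e2 \<sigma> (Num n2) \<Longrightarrow>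
             eval (Bin op e1 e2) \<sigma> (Num (apply_op op n1 n2))"
| eval_input: "eval Input \<sigma> v"

inductive step :: "com \<Rightarrow> store \<Rightarrow> com \<Rightarrow> store \<Rightarrow> bool" where
  step_alloc: "x |\<notin>| fmdom \<sigma> \<Longrightarrow> step (Alloc x) \<sigma> Skip (fmupd x Null \<sigma>)"
| step_assign: "x |\<in>| fmdom \<sigma> \<Longrightarrow> eval e \<sigma> v \<Longrightarrow> step (Assign x e) \<sigma> Skip (fmupd x v \<sigma>)"
| step_seq: "step c1 \<sigma> c1' \<sigma>' \<Longrightarrow> step (Seq c1 c2) \<sigma> (Seq c1' c2) \<sigma>'"
| step_seq_skip: "step (Seq Skip c2) \<sigma> c2 \<sigma>"
| step_if_true: "eval e \<sigma> v \<Longrightarrow> v \<noteq> Num 0 \<Longrightarrow> step (If e c1 c2) \<sigma> c1 \<sigma>"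
| step_if_false: "eval e \<sigma> (Num 0) \<Longrightarrow> step (If e c1 c2) \<sigma> c2 \<sigma>"
| step_while_true: "eval e \<sigma> v \<Longrightarrow> v \<noteq> Num 0 \<Longrightarrow> step (While e c) \<sigma> (Seq c (While e c)) \<sigma>"
| step_while_false: "eval e \<sigma> (Num 0) \<Longrightarrow> step (While e c) \<sigma> Skip \<sigma>"

coinductive diverges :: "com \<Rightarrow> store \<Rightarrow> bool" where
  "step c \<sigma> c' \<sigma>' \<Longrightarrow> diverges c' \<sigma>' \<Longrightarrow> diverges c \<sigma>"

text \<open>Status flags: Conv = \<open>\<Down>\<close>, Div = \<open>\<Up>\<close>.\<close>
datatype flag = Conv | Div

inductive geval :: "exp \<Rightarrow> store \<Rightarrow> flag \<Rightarrow> val \<Rightarrow> flag \<Rightarrow> bool" where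
  geval_val: "geval (V v) \<sigma> Conv v Conv"
| geval_var: "fmlookup \<sigma> x = Some v \<Longrightarrow> geval (Var x) \<sigma> Conv v Conv"
| geval_bin: "geval e1 \<sigma> Conv (Num n1) \<delta> \<Longrightarrow> geval e2 \<sigma> \<delta> (Num n2) \<delta>' \<Longrightarrow>
             geval (Bin op e1 e2) \<sigma> Conv (Num (apply_op op n1 n2)) \<delta>'"
| geval_input: "geval Input \<sigma> Conv v Conv"
| geval_div: "geval e \<sigma> Div v Div"

coinductive gbig_co :: "com \<Rightarrow> store \<Rightarrow> flag \<Rightarrow> store \<Rightarrow> flag \<Rightarrow> bool" where
  g_skip: "gbig_co Skip \<sigma> Conv \<sigma> Conv"
| g_alloc: "x |\<notin>| fmdom \<sigma> \<Longrightarrow> gbig_co (Alloc x) \<sigma> Conv (fmupd x Null \<sigma>) Conv"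
| g_assign: "x |\<in>| fmdom \<sigma> \<Longrightarrow> geval e \<sigma> Conv v \<delta> \<Longrightarrow>
             gbig_co (Assign x e) \<sigma> Conv (fmupd x v \<sigma>) \<delta>"
| g_seq: "gbig_co c1 \<sigma> Conv \<sigma>' \<delta> \<Longrightarrow> gbig_co c2 \<sigma>' \<delta> \<sigma>'' \<delta>' \<Longrightarrow>
          gbig_co (Seq c1 c2) \<sigma> Conv \<sigma>'' \<delta>'"
| g_if_true: "v \<noteq> Num 0 \<Longrightarrow> geval e \<sigma> Conv v \<delta> \<Longrightarrow> gbig_co c1 \<sigma> \<delta> \<sigma>' \<delta>' \<Longrightarrow>
              gbig_co (If e c1 c2) \<sigma> Conv \<sigma>' \<delta>'"
| g_if_false: "geval e \<sigma> Conv (Num 0) \<delta> \<Longrightarrow> gbig_co c2 \<sigma> \<delta> \<sigma>' \<delta>' \<Longrightarrow>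
              gbig_co (If e c1 c2) \<sigma> Conv \<sigma>' \<delta>'"
| g_while_true: "geval e \<sigma> Conv v \<delta> \<Longrightarrow> v \<noteq> Num 0 \<Longrightarrow> gbig_co c \<sigma> \<delta> \<sigma>' \<delta>' \<Longrightarrow>
                 gbig_co (While e c) \<sigma>' \<delta>' \<sigma>'' \<delta>'' \<Longrightarrow>
                 gbig_co (While e c) \<sigma> Conv \<sigma>'' \<delta>''"
| g_while_false: "geval e \<sigma> Conv (Num 0) \<delta> \<Longrightarrow> gbig_co (While e c) \<sigma> Conv \<sigma> \<delta>"
| g_div: "gbig_co c \<sigma> Div \<sigma>' Div"

end

(*
  The only real work is sequencing c1;c2: a diverging run either stays inside c1 forever,
  and then c2 is entered with flag Div, which accepts any store; or c1 reaches Skip after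
  finitely many steps in some store s1, and this finite run yields a Conv-derivation
  of c1 ending in s1, while c2 diverges from s1. The loop rule is handled the same way.

  Conversely, a derivation of (c, s, Conv) => (s', d) for c other than Skip can be advanced
  by one small step to a derivation of the same kind for the successor configuration
  (structural induction on c). For d = Div the command never becomes Skip, so this
  yields an infinite run; a single final store already suffices.
*)
theory Submission
  imports Defs
begin

lemma eval_imp_geval: "eval e \<sigma> v \<Longrightarrow> geval e \<sigma> Conv v Conv"
  by (induction rule: eval.induct) (auto intro: geval.intros)

lemma geval_ConvD: "geval e \<sigma> Conv v \<delta> \<Longrightarrow> \<delta> = Conv \<and> eval e \<sigma> v"
  by (induction e \<sigma> "Conv" v \<delta> rule: geval.induct) (auto intro: eval.intros)

inductive steps :: "com \<Rightarrow> store \<Rightarrow> com \<Rightarrow> store \<Rightarrow> bool" where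
  steps_refl: "steps c \<sigma> c \<sigma>"
| steps_step: "step c \<sigma> c' \<sigma>' \<Longrightarrow> steps c' \<sigma>' c'' \<sigma>'' \<Longrightarrow> steps c \<sigma> c'' \<sigma>''"

lemma not_diverges_Skip: "\<not> diverges Skip \<sigma>"
  by (auto elim: diverges.cases step.cases)

lemma diverges_Seq:
  assumes "diverges (Seq c1 c2) \<sigma>"
  shows "diverges c1 \<sigma> \<or> (\<exists>\<sigma>1. steps c1 \<sigma> Skip \<sigma>1 \<and> diverges c2 \<sigma>1)"
proof -
  have "diverges c1 \<sigma>"
    if "diverges (Seq c1 c2) \<sigma>" "\<nexists>\<sigma>1. steps c1 \<sigma> Skip \<sigma>1 \<and> diverges c2 \<sigma>1" for c1 \<sigma>
    using that
  proof (coinduction arbitrary: c1 \<sigma>)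
    case (diverges c1 \<sigma>)
    then obtain c' \<sigma>' where "step (Seq c1 c2) \<sigma> c' \<sigma>'" "diverges c' \<sigma>'"
      by (auto elim: diverges.cases)
    then show ?case
      using diverges(2) by (cases rule: step.cases) (auto intro: steps.intros)
  qed
  then show ?thesis
    using assms by blast
qed

lemma diverges_If:
  "diverges (If e c1 c2) \<sigma> \<Longrightarrow>
    (\<exists>v. eval e \<sigma> v \<and> v \<noteq> Num 0 \<and> diverges c1 \<sigma>) \<or> (eval e \<sigma> (Num 0) \<and> diverges c2 \<sigma>)"
  by (auto elim: diverges.cases step.cases)

lemma diverges_While:
  "diverges (While e c) \<sigma> \<Longrightarrow>
    \<exists>v. eval e \<sigma> v \<and> v \<noteq> Num 0 \<and> diverges (Seq c (While e c)) \<sigma>"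
  by (erule diverges.cases) (auto elim: step.cases simp: not_diverges_Skip)

lemma not_diverges_Alloc: "\<not> diverges (Alloc x) \<sigma>"
  by (auto elim: diverges.cases step.cases simp: not_diverges_Skip)

lemma not_diverges_Assign: "\<not> diverges (Assign x e) \<sigma>"
  by (auto elim: diverges.cases step.cases simp: not_diverges_Skip)

inductive_cases gbig_co_SkipE: "gbig_co Skip \<sigma> Conv \<sigma>' \<delta>"
inductive_cases gbig_co_AllocE: "gbig_co (Alloc x) \<sigma> Conv \<sigma>' \<delta>"
inductive_cases gbig_co_AssignE: "gbig_co (Assign x e) \<sigma> Conv \<sigma>' \<delta>"
inductive_cases gbig_co_SeqE: "gbig_co (Seq c1 c2) \<sigma> Conv \<sigma>' \<delta>"
inductive_cases gbig_co_IfE: "gbig_co (If e c1 c2) \<sigma> Conv \<sigma>' \<delta>"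
inductive_cases gbig_co_WhileE: "gbig_co (While e c) \<sigma> Conv \<sigma>' \<delta>"

lemma step_gbig_co:
  "step c \<sigma> c' \<sigma>' \<Longrightarrow> gbig_co c' \<sigma>' Conv \<sigma>'' \<delta> \<Longrightarrow> gbig_co c \<sigma> Conv \<sigma>'' \<delta>"
  by (induction arbitrary: \<sigma>'' \<delta> rule: step.induct)
    (auto elim!: gbig_co_SkipE gbig_co_SeqE intro: gbig_co.intros eval_imp_geval)

lemma steps_Skip_gbig_co: "steps c \<sigma> Skip \<sigma>' \<Longrightarrow> gbig_co c \<sigma> Conv \<sigma>' Conv"
  by (induction c \<sigma> Skip \<sigma>' rule: steps.induct) (auto intro: g_skip step_gbig_co)

lemma diverges_imp_gbig_co_Div:
  assumes "diverges c \<sigma>"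
  shows "gbig_co c \<sigma> Conv \<sigma>' Div"
  using assms
proof (coinduction arbitrary: c \<sigma> \<sigma>' rule: gbig_co.coinduct)
  case (gbig_co c \<sigma> \<sigma>')
  show ?case
  proof (cases c)
    case (Seq c1 c2)
    from gbig_co Seq consider "diverges c1 \<sigma>"
      | \<sigma>1 where "steps c1 \<sigma> Skip \<sigma>1" "diverges c2 \<sigma>1"
      using diverges_Seq by blast
    then show ?thesis
    proof cases
      case 1
      then show ?thesis using Seq by (auto intro: g_div)
    next
      case 2
      then show ?thesis using Seq by (auto intro: steps_Skip_gbig_co)
    qed
  next
    case (If e c1 c2)
    from gbig_co If consider v where "eval e \<sigma> v" "v \<noteq> Num 0" "diverges c1 \<sigma>"
      | "eval e \<sigma> (Num 0)" "diverges c2 \<sigma>"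
      using diverges_If by blast
    then show ?thesis
      using If by cases (auto dest: eval_imp_geval)
  next
    case (While e cb)
    from gbig_co While obtain v where "eval e \<sigma> v" "v \<noteq> Num 0"
      and "diverges (Seq cb (While e cb)) \<sigma>"
      using diverges_While by blast
    with diverges_Seq consider "diverges cb \<sigma>"
      | \<sigma>1 where "steps cb \<sigma> Skip \<sigma>1" "diverges (While e cb) \<sigma>1"
      by blast
    then show ?thesis
    proof cases
      case 1
      then show ?thesis using While \<open>eval e \<sigma> v\<close> \<open>v \<noteq> Num 0\<close>
        by (blast intro: g_div eval_imp_geval)
    next
      case 2
      then show ?thesis using While \<open>eval e \<sigma> v\<close> \<open>v \<noteq> Num 0\<close>
        by (blast intro: steps_Skip_gbig_co eval_imp_geval)
    qed
  qed (use gbig_co not_diverges_Skip not_diverges_Alloc not_diverges_Assign in auto)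
qed

lemma gbig_co_progress:
  "gbig_co c \<sigma> Conv \<sigma>' \<delta> \<Longrightarrow> c \<noteq> Skip \<Longrightarrow>
    \<exists>c' \<sigma>''. step c \<sigma> c' \<sigma>'' \<and> gbig_co c' \<sigma>'' Conv \<sigma>' \<delta>"
proof (induction c arbitrary: \<sigma> \<sigma>' \<delta>)
  case Skip
  then show ?case by simp
next
  case (Alloc x)
  then show ?case
    by (auto elim!: gbig_co_AllocE intro: step.intros gbig_co.intros)
next
  case (Assign x e)
  then show ?case
    by (auto elim!: gbig_co_AssignE dest!: geval_ConvD intro: step.intros gbig_co.intros)
next
  case (Seq c1 c2)
  from Seq.prems(1) obtain \<sigma>1 \<delta>1 where c1: "gbig_co c1 \<sigma> Conv \<sigma>1 \<delta>1"
    and c2: "gbig_co c2 \<sigma>1 \<delta>1 \<sigma>' \<delta>"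
    by (auto elim: gbig_co_SeqE)
  show ?case
  proof (cases "c1 = Skip")
    case True
    with c1 have "\<sigma>1 = \<sigma>" "\<delta>1 = Conv"
      by (auto elim: gbig_co_SkipE)
    with True c2 show ?thesis
      by (auto intro: step_seq_skip)
  next
    case False
    with Seq.IH(1) c1 obtain c1' \<sigma>'' where "step c1 \<sigma> c1' \<sigma>''" "gbig_co c1' \<sigma>'' Conv \<sigma>1 \<delta>1"
      by blast
    with c2 show ?thesis
      by (auto intro: step_seq g_seq)
  qed
next
  case (If e c1 c2)
  then show ?case
    by (auto elim!: gbig_co_IfE dest!: geval_ConvD intro: step.intros)
next
  case (While e c)
  then show ?case
    by (auto elim!: gbig_co_WhileE dest!: geval_ConvD intro: step.intros gbig_co.intros)
qed

lemma gbig_co_Div_imp_diverges: "gbig_co c \<sigma> Conv \<sigma>' Div \<Longrightarrow> diverges c \<sigma>"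
proof (coinduction arbitrary: c \<sigma>)
  case (diverges c \<sigma>)
  then have "c \<noteq> Skip"
    by (auto elim: gbig_co_SkipE)
  with diverges show ?case
    using gbig_co_progress by blast
qed

theorem theorem27:
  fixes c :: com and \<sigma> :: store
  shows "diverges c \<sigma> \<longleftrightarrow> (\<forall>\<sigma>' :: store. gbig_co c \<sigma> Conv \<sigma>' Div)"
  using diverges_imp_gbig_co_Div gbig_co_Div_imp_diverges by blast

end
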